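(* Let $a,b\in\mathbb{Q}$ be such that $f(x)=x^{12}+ax^6+b$ is irreducible over $\mathbb{Q}$. Let $G_4$ be the Galois group of $x^4+ax^2+b$ and $G_6$ the Galois group of $x^6+ax^3+b$ over $\mathbb{Q}$. Then $(G_4,G_6)\notin\{(4T1,6T1),(4T1,6T2),(4T1,6T5)\}$.
   Context: Galois groups are regarded as transitive permutation groups on the roots up to conjugacy; $nTj$ denotes the $j$-th conjugacy class of transitive subgroups of $S_n$ in the Butler–McKay numbering (so $4T1=C_4$, $6T1=C_6$, $6T2=S_3$ acting regularly, $6T5=C_3\times S_3$). *)

theory Defs
  imports Complex_Main "HOL-Computational_Algebra.Polynomial" "HOL-Combinatorics.Cycles"
begin

definition root_set :: "rat poly \<Rightarrow> complex set" where
  "root_set p = {z. poly (map_poly of_rat p) z = 0}"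

definition is_subfield :: "complex set \<Rightarrow> bool" where
  "is_subfield S \<longleftrightarrow> 0 \<in> S \<and> 1 \<in> S \<and>
     (\<forall>x\<in>S. \<forall>y\<in>S. x + y \<in> S \<and> x * y \<in> S) \<and>
     (\<forall>x\<in>S. - x \<in> S \<and> inverse x \<in> S)"

definition splitting_field :: "rat poly \<Rightarrow> complex set" where
  "splitting_field p = \<Inter>{S. is_subfield S \<and> root_set p \<subseteq> S}"

text \<open>Field automorphisms of the splitting field (they automatically fix Q).\<close>
definition gal_auts :: "rat poly \<Rightarrow> (complex \<Rightarrow> complex) set" where
  "gal_auts p = {\<sigma>. let K = splitting_field p in
      \<sigma> ` K = K \<and> inj_on \<sigma> K \<and> \<sigma> 1 = 1 \<and>
      (\<forall>x\<in>K. \<forall>y\<in>K. \<sigma> (x + y) = \<sigma> x + \<sigma> y \<and> \<sigma> (x * y) = \<sigma> x * \<sigma> y)}"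

text \<open>A group G of maps acting on R is, as a permutation group, conjugate to the
  permutation group T on {0..<n}: there is a labelling of R by {0..<n}
  transporting the action of G exactly onto T.\<close>
definition perm_conj :: "(complex \<Rightarrow> complex) set \<Rightarrow> complex set \<Rightarrow> nat \<Rightarrow> (nat \<Rightarrow> nat) set \<Rightarrow> bool" where
  "perm_conj G R n T \<longleftrightarrow> (\<exists>\<phi>. bij_betw \<phi> R {..<n} \<and>
      (\<lambda>\<sigma> i. if i < n then \<phi> (\<sigma> (inv_into R \<phi> i)) else i) ` G = T)"

definition galois_group_is :: "rat poly \<Rightarrow> nat \<Rightarrow> (nat \<Rightarrow> nat) set \<Rightarrow> bool" where
  "galois_group_is p n T \<longleftrightarrow> perm_conj (gal_auts p) (root_set p) n T"

inductive_set perm_gen :: "(nat \<Rightarrow> nat) set \<Rightarrow> (nat \<Rightarrow> nat) set" for S where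
  gen_id: "id \<in> perm_gen S"
| gen_step: "s \<in> S \<Longrightarrow> g \<in> perm_gen S \<Longrightarrow> s \<circ> g \<in> perm_gen S"

text \<open>Representatives of the transitive groups (points 1..n renumbered 0..n-1).\<close>
definition T4_1 :: "(nat \<Rightarrow> nat) set" where
  "T4_1 = perm_gen {cycle_of_list [0,1,2,3]}"

definition T6_1 :: "(nat \<Rightarrow> nat) set" where
  "T6_1 = perm_gen {cycle_of_list [0,1,2,3,4,5]}"

definition T6_2 :: "(nat \<Rightarrow> nat) set" where  \<comment> \<open>S3 acting regularly (left multiplication)\<close>
  "T6_2 = perm_gen {cycle_of_list [0,1,2] \<circ> cycle_of_list [3,5,4],
                    Transposition.transpose 0 3 \<circ> Transposition.transpose 1 4 \<circ> Transposition.transpose 2 5}"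

definition T6_5 :: "(nat \<Rightarrow> nat) set" where  \<comment> \<open>C3 x S3 = C3 wr C2\<close>
  "T6_5 = perm_gen {cycle_of_list [0,1,2], cycle_of_list [3,4,5],
                    Transposition.transpose 0 3 \<circ> Transposition.transpose 1 4 \<circ> Transposition.transpose 2 5}"

end

theory Submission
  imports Defs
begin

text \<open>
  Complex conjugation maps every splitting field inside \<complex> onto itself, so it acts on
  the roots of each polynomial as an involution in the Galois group, fixing exactly the real
  roots.

  If \<open>a\<^sup>2 \<ge> 4b\<close>, the quadratic \<open>y\<^sup>2 + ay + b\<close> has a real root \<open>u\<close>, nonzero because
  irreducibility forces \<open>b \<noteq> 0\<close>. With \<open>r\<close> the real cube root of \<open>u\<close>, the sextic
  \<open>x\<^sup>6 + ax\<^sup>3 + b\<close> has the real root \<open>r\<close> and the non-real root \<open>\<omega>r\<close>, so conjugation is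
  an involution of \<open>G\<^sub>6\<close> that fixes a point without being trivial. In 6T1, 6T2 and 6T5 every
  involution is fixed-point free.

  If \<open>a\<^sup>2 < 4b\<close>, the roots of \<open>x\<^sup>4 + ax\<^sup>2 + b\<close> are square roots of the two non-real
  roots of the quadratic, so conjugation is a non-trivial involution of \<open>G\<^sub>4\<close>. If \<open>G\<^sub>4\<close> is
  cyclic with generator \<open>\<tau>\<close>, conjugation must be \<open>\<tau>\<^sup>2\<close> on the roots; but \<open>\<tau>\<^sup>2\<close> fixes
  every element of the splitting field of degree at most 2 over \<rat>, in particular the
  non-real root \<open>u\<close> of the quadratic, which conjugation moves.
\<close>

section \<open>Subfields of \<complex> and their automorphisms\<close>

lemma is_subfield_of_nat: "is_subfield S \<Longrightarrow> of_nat n \<in> S"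
  by (induction n) (auto simp: is_subfield_def)

lemma is_subfield_of_int: "is_subfield S \<Longrightarrow> of_int n \<in> S"
  by (cases n rule: int_cases2) (auto simp: is_subfield_def is_subfield_of_nat)

lemma is_subfield_of_rat:
  assumes S: "is_subfield S"
  shows "of_rat c \<in> S"
proof (cases c)
  case (Fract n d)
  then have "(of_rat c :: complex) = of_int n * inverse (of_int d)"
    by (simp add: of_rat_rat divide_inverse)
  then show ?thesis
    using S is_subfield_of_int[OF S] unfolding is_subfield_def by metis
qed

lemma is_subfield_poly:
  assumes S: "is_subfield S" and z: "z \<in> S"
  shows "poly (map_poly of_rat q) z \<in> S"
proof (induction q)
  case 0
  then show ?case using S by (simp add: is_subfield_def)
next
  case (pCons c q)
  then show ?case
    using S z is_subfield_of_rat[OF S, of c] by (simp add: map_poly_pCons is_subfield_def)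
qed

lemma is_subfield_splitting_field: "is_subfield (splitting_field p)"
  unfolding splitting_field_def is_subfield_def by auto

lemma root_set_subset_splitting_field: "root_set p \<subseteq> splitting_field p"
  unfolding splitting_field_def by auto

context
  fixes \<sigma> p
  assumes \<sigma>: "\<sigma> \<in> gal_auts p"
begin

lemma gal_aut_image: "\<sigma> ` splitting_field p = splitting_field p"
  and gal_aut_one: "\<sigma> 1 = 1"
  and gal_aut_add:
    "x \<in> splitting_field p \<Longrightarrow> y \<in> splitting_field p \<Longrightarrow> \<sigma> (x + y) = \<sigma> x + \<sigma> y"
  and gal_aut_mult:
    "x \<in> splitting_field p \<Longrightarrow> y \<in> splitting_field p \<Longrightarrow> \<sigma> (x * y) = \<sigma> x * \<sigma> y"
  using \<sigma> unfolding gal_auts_def Let_def by auto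

lemma gal_aut_zero: "\<sigma> 0 = 0"
  using gal_aut_add[of 0 0] is_subfield_splitting_field[of p] by (simp add: is_subfield_def)

lemma gal_aut_minus:
  assumes "x \<in> splitting_field p"
  shows "\<sigma> (- x) = - \<sigma> x"
proof -
  have "\<sigma> x + \<sigma> (- x) = 0"
    using gal_aut_add[of x "- x"] gal_aut_zero assms is_subfield_splitting_field[of p]
    by (simp add: is_subfield_def)
  then show ?thesis by (simp add: add_eq_0_iff)
qed

lemma gal_aut_of_nat: "\<sigma> (of_nat n) = of_nat n"
proof (induction n)
  case 0
  then show ?case by (simp add: gal_aut_zero)
next
  case (Suc n)
  then show ?case
    using gal_aut_add[of 1 "of_nat n"] gal_aut_one is_subfield_splitting_field[of p]
      is_subfield_of_nat[of "splitting_field p" n] by (simp add: is_subfield_def)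
qed

lemma gal_aut_of_int: "\<sigma> (of_int n) = of_int n"
  by (cases n rule: int_cases2)
    (simp_all add: gal_aut_of_nat gal_aut_minus is_subfield_of_nat is_subfield_splitting_field)

lemma gal_aut_of_rat: "\<sigma> (of_rat c) = of_rat c"
proof (cases c)
  case (Fract n d)
  then have c: "of_int d * of_rat c = (of_int n :: complex)"
    by (simp add: of_rat_rat)
  have "of_int d * \<sigma> (of_rat c) = \<sigma> (of_int d * of_rat c)"
    by (simp add: gal_aut_mult gal_aut_of_int is_subfield_of_int is_subfield_of_rat
        is_subfield_splitting_field)
  also have "\<dots> = of_int d * of_rat c"
    by (simp add: c gal_aut_of_int)
  finally show ?thesis
    using \<open>d > 0\<close> by simp
qed

lemma gal_aut_poly:
  assumes z: "z \<in> splitting_field p"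
  shows "\<sigma> (poly (map_poly of_rat q) z) = poly (map_poly of_rat q) (\<sigma> z)"
proof (induction q)
  case 0
  then show ?case by (simp add: gal_aut_zero)
next
  case (pCons c q)
  have "poly (map_poly of_rat q) z \<in> splitting_field p"
    by (simp add: z is_subfield_poly is_subfield_splitting_field)
  then show ?case
    using pCons z is_subfield_splitting_field[of p]
    by (simp add: map_poly_pCons gal_aut_add gal_aut_mult gal_aut_of_rat is_subfield_of_rat
        is_subfield_def)
qed

lemma gal_aut_root_set: "x \<in> root_set p \<Longrightarrow> \<sigma> x \<in> root_set p"
  using gal_aut_poly[of x p] root_set_subset_splitting_field[of p] gal_aut_zero
  unfolding root_set_def by auto

lemma gal_aut_quadratic_involution:
  assumes u: "u \<in> splitting_field p" and quadratic: "u\<^sup>2 + of_rat a * u + of_rat b = 0"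
  shows "\<sigma> (\<sigma> u) = u"
proof -
  have eval: "poly (map_poly of_rat [:b, a, 1:]) z = z\<^sup>2 + of_rat a * z + of_rat b" for z :: complex
    by (simp add: map_poly_pCons power2_eq_square algebra_simps)
  have other_root: "poly (map_poly of_rat [:-a, -1:]) z = - of_rat a - z" for z :: complex
    by (simp add: map_poly_pCons of_rat_minus)
  have "(\<sigma> u)\<^sup>2 + of_rat a * \<sigma> u + of_rat b = 0"
    using gal_aut_poly[OF u, of "[:b, a, 1:]"] quadratic gal_aut_zero by (simp add: eval)
  moreover have "(\<sigma> u - u) * (\<sigma> u - (- of_rat a - u))
      = ((\<sigma> u)\<^sup>2 + of_rat a * \<sigma> u + of_rat b) - (u\<^sup>2 + of_rat a * u + of_rat b)"
    by (simp add: power2_eq_square algebra_simps)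
  ultimately have "(\<sigma> u - u) * (\<sigma> u - (- of_rat a - u)) = 0"
    using quadratic by simp
  then consider "\<sigma> u = u" | "\<sigma> u = - of_rat a - u"
    by auto
  then show ?thesis
  proof cases
    case 2
    then have "\<sigma> (\<sigma> u) = - of_rat a - \<sigma> u"
      using gal_aut_poly[OF u, of "[:-a, -1:]"] by (simp add: other_root)
    then show ?thesis using 2 by simp
  qed simp
qed

end

section \<open>Complex conjugation as a permutation of the roots\<close>

lemma complex_of_rat_eq_of_real: "(of_rat c :: complex) = of_real (of_rat c)"
  by (cases c) (simp add: of_rat_rat)

lemma cnj_root_set:
  assumes "x \<in> root_set p"
  shows "cnj x \<in> root_set p"
proof -
  have "cnj (poly (map_poly of_rat q) z) = poly (map_poly of_rat q) (cnj z)" for q z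
    by (induction q) (simp_all add: map_poly_pCons complex_of_rat_eq_of_real)
  then show ?thesis
    using assms unfolding root_set_def by (metis complex_cnj_zero mem_Collect_eq)
qed

lemma is_subfield_cnj_image:
  assumes "is_subfield S"
  shows "is_subfield (cnj ` S)"
proof -
  have "cnj ` S = {x. cnj x \<in> S}"
    by (auto simp: image_iff) (metis complex_cnj_cnj)
  then show ?thesis
    using assms by (auto simp: is_subfield_def)
qed

lemma cnj_splitting_field: "cnj ` splitting_field p = splitting_field p"
proof -
  have "cnj x \<in> splitting_field p" if x: "x \<in> splitting_field p" for x
  proof (unfold splitting_field_def, intro InterI, clarify)
    fix S assume S: "is_subfield S" "root_set p \<subseteq> S"
    have "root_set p \<subseteq> cnj ` S"
    proof
      fix r assume "r \<in> root_set p"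
      then have "cnj r \<in> S" using S(2) cnj_root_set by blast
      then show "r \<in> cnj ` S" by (metis complex_cnj_cnj image_eqI)
    qed
    then have "x \<in> cnj ` S"
      using x is_subfield_cnj_image[OF S(1)] unfolding splitting_field_def by blast
    then show "cnj x \<in> S" by auto
  qed
  then show ?thesis
    by (auto intro: image_eqI[where x = "cnj _"])
qed

lemma cnj_gal_aut: "cnj \<in> gal_auts p"
  using cnj_splitting_field unfolding gal_auts_def Let_def by (auto simp: inj_on_def)

lemma perm_conjE:
  assumes "perm_conj G R n T"
  obtains \<phi> where "bij_betw \<phi> R {..<n}"
    and "\<And>\<sigma>. \<sigma> \<in> G \<Longrightarrow> \<exists>P\<in>T. \<forall>x\<in>R. P (\<phi> x) = \<phi> (\<sigma> x)"
    and "\<And>P. P \<in> T \<Longrightarrow> \<exists>\<sigma>\<in>G. \<forall>x\<in>R. P (\<phi> x) = \<phi> (\<sigma> x)"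
proof -
  obtain \<phi> where \<phi>: "bij_betw \<phi> R {..<n}"
    and T: "(\<lambda>\<sigma> i. if i < n then \<phi> (\<sigma> (inv_into R \<phi> i)) else i) ` G = T"
    using assms unfolding perm_conj_def by blast
  define transported where "transported \<sigma> i = (if i < n then \<phi> (\<sigma> (inv_into R \<phi> i)) else i)"
    for \<sigma> i
  have T: "transported ` G = T"
    using T unfolding transported_def[abs_def] .
  have transport: "transported \<sigma> (\<phi> x) = \<phi> (\<sigma> x)" if "x \<in> R" for x \<sigma>
    using \<phi> that by (auto simp: transported_def bij_betw_def inv_into_f_f)
  show ?thesis
  proof (rule that[OF \<phi>])
    fix \<sigma> assume "\<sigma> \<in> G"
    show "\<exists>P\<in>T. \<forall>x\<in>R. P (\<phi> x) = \<phi> (\<sigma> x)"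
    proof
      show "transported \<sigma> \<in> T" using T \<open>\<sigma> \<in> G\<close> by blast
      show "\<forall>x\<in>R. transported \<sigma> (\<phi> x) = \<phi> (\<sigma> x)" using transport by blast
    qed
  next
    fix P assume "P \<in> T"
    then obtain \<sigma> where "\<sigma> \<in> G" "P = transported \<sigma>"
      using T by blast
    then show "\<exists>\<sigma>\<in>G. \<forall>x\<in>R. P (\<phi> x) = \<phi> (\<sigma> x)"
      using transport by blast
  qed
qed

lemma cnj_perm_involution:
  assumes \<phi>: "bij_betw \<phi> (root_set p) {..<n}"
    and P: "\<And>x. x \<in> root_set p \<Longrightarrow> P (\<phi> x) = \<phi> (cnj x)"
  shows "\<forall>k<n. P (P k) = k"
proof (intro allI impI)
  fix k assume "k < n"
  then obtain x where "x \<in> root_set p" "k = \<phi> x"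
    using bij_betw_imp_surj_on[OF \<phi>] by (metis imageE lessThan_iff)
  then show "P (P k) = k"
    using P cnj_root_set by simp
qed

lemma cnj_perm_fixed_iff:
  assumes \<phi>: "bij_betw \<phi> (root_set p) {..<n}"
    and P: "\<And>x. x \<in> root_set p \<Longrightarrow> P (\<phi> x) = \<phi> (cnj x)"
    and x: "x \<in> root_set p"
  shows "P (\<phi> x) = \<phi> x \<longleftrightarrow> x \<in> \<real>"
proof -
  have "\<phi> (cnj x) = \<phi> x \<longleftrightarrow> cnj x = x"
    using inj_on_eq_iff[OF bij_betw_imp_inj_on[OF \<phi>] cnj_root_set[OF x] x] .
  then show ?thesis
    using P[OF x] by (simp add: Reals_cnj_iff)
qed

section \<open>Element tables of the transitive groups\<close>

lemma perm_gen_table: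
  assumes "P \<in> perm_gen S" and "xs \<in> L" and "\<And>s l. s \<in> S \<Longrightarrow> l \<in> L \<Longrightarrow> map s l \<in> L"
  shows "map P xs \<in> L"
  using assms(1)
proof induction
  case gen_id
  then show ?case using assms(2) by simp
next
  case (gen_step s g)
  then show ?case using assms(3)[of s "map g xs"] by (simp add: comp_def)
qed

lemma T4_1_table: "P \<in> T4_1 \<Longrightarrow>
    map P [0,1,2,3] \<in> {[0,1,2,3], [1,2,3,0], [2,3,0,1], [3,0,1,2]}"
  unfolding T4_1_def by (erule perm_gen_table) auto

lemma T6_1_table:
  "P \<in> T6_1 \<Longrightarrow>
    map P [0,1,2,3,4,5] \<in> {[0,1,2,3,4,5], [1,2,3,4,5,0], [2,3,4,5,0,1],
    [3,4,5,0,1,2], [4,5,0,1,2,3], [5,0,1,2,3,4]}"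
  unfolding T6_1_def by (erule perm_gen_table) auto

definition T6_5_tables :: "nat list set" where
  "T6_5_tables = {[0,1,2,3,4,5], [0,1,2,4,5,3], [0,1,2,5,3,4], [1,2,0,3,4,5], [1,2,0,4,5,3],
    [1,2,0,5,3,4], [2,0,1,3,4,5], [2,0,1,4,5,3], [2,0,1,5,3,4], [3,4,5,0,1,2], [3,4,5,1,2,0],
    [3,4,5,2,0,1], [4,5,3,0,1,2], [4,5,3,1,2,0], [4,5,3,2,0,1], [5,3,4,0,1,2], [5,3,4,1,2,0],
    [5,3,4,2,0,1]}"

lemma T6_2_table: "P \<in> T6_2 \<Longrightarrow> map P [0,1,2,3,4,5] \<in> T6_5_tables"
  unfolding T6_2_def T6_5_tables_def
  by (erule perm_gen_table) (auto simp: Transposition.transpose_def)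

lemma T6_5_table: "P \<in> T6_5 \<Longrightarrow> map P [0,1,2,3,4,5] \<in> T6_5_tables"
  unfolding T6_5_def T6_5_tables_def
  by (erule perm_gen_table) (auto simp: Transposition.transpose_def)

lemma cycle4_in_T4_1: "cycle_of_list [0,1,2,3] \<in> T4_1"
  unfolding T4_1_def using perm_gen.gen_step[OF _ perm_gen.gen_id] by fastforce

lemma T4_1_nontrivial_involution:
  assumes "P \<in> T4_1" and "\<forall>k<4. P (P k) = k" and "j < 4" and "P j \<noteq> j"
  shows "\<forall>k<4. P k = cycle_of_list [0,1,2,3] (cycle_of_list [0,1,2,3] k)"
proof -
  have "P (P 0) = 0 \<and> P (P 1) = 1 \<and> P (P 2) = 2 \<and> P (P 3) = 3"
    using assms(2) by simp
  moreover have "j \<in> {0,1,2,3}" using assms(3) by auto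
  ultimately have "map P [0,1,2,3] = [2,3,0,1]"
    using T4_1_table[OF assms(1)] assms(4) by auto
  moreover have "k \<in> {0,1,2,3}" if "k < 4" for k :: nat using that by auto
  ultimately show ?thesis
    by (auto simp: Transposition.transpose_def)
qed

lemma T6_involution_with_fixed_point:
  assumes "P \<in> T6_1 \<union> T6_2 \<union> T6_5" and "\<forall>k<6. P (P k) = k" and "j < 6" and "P j = j"
  shows "\<forall>k<6. P k = k"
proof -
  have "map P [0,1,2,3,4,5] \<in> {[0,1,2,3,4,5], [1,2,3,4,5,0], [2,3,4,5,0,1], [3,4,5,0,1,2],
    [4,5,0,1,2,3], [5,0,1,2,3,4]} \<union> T6_5_tables"
    using assms(1) T6_1_table T6_2_table T6_5_table by blast
  moreover have
    "P (P 0) = 0 \<and> P (P 1) = 1 \<and> P (P 2) = 2 \<and> P (P 3) = 3 \<and> P (P 4) = 4 \<and> P (P 5) = 5"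
    using assms(2) by simp
  moreover have "j \<in> {0,1,2,3,4,5}" using assms(3) by auto
  ultimately have "map P [0,1,2,3,4,5] = [0,1,2,3,4,5]"
    using assms(4) unfolding T6_5_tables_def by auto
  moreover have "k \<in> {0,1,2,3,4,5}" if "k < 6" for k :: nat using that by auto
  ultimately show ?thesis
    by auto
qed

lemma T6_galois_group_no_real_and_nonreal_roots:
  assumes "galois_group_is p 6 T" and "T \<subseteq> T6_1 \<union> T6_2 \<union> T6_5"
    and "x1 \<in> root_set p" "x1 \<in> \<real>" and "x2 \<in> root_set p" "x2 \<notin> \<real>"
  shows False
proof -
  obtain \<phi> where \<phi>: "bij_betw \<phi> (root_set p) {..<6}"
    and auts: "\<And>\<sigma>. \<sigma> \<in> gal_auts p \<Longrightarrow> \<exists>P\<in>T. \<forall>x\<in>root_set p. P (\<phi> x) = \<phi> (\<sigma> x)"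
    using assms(1) unfolding galois_group_is_def by (elim perm_conjE) blast
  obtain P where "P \<in> T" and P: "\<And>x. x \<in> root_set p \<Longrightarrow> P (\<phi> x) = \<phi> (cnj x)"
    using auts[OF cnj_gal_aut] by blast
  have "\<forall>k<6. P k = k"
  proof (rule T6_involution_with_fixed_point)
    show "P \<in> T6_1 \<union> T6_2 \<union> T6_5" using \<open>P \<in> T\<close> assms(2) by blast
    show "\<forall>k<6. P (P k) = k" using cnj_perm_involution[OF \<phi> P] .
    show "\<phi> x1 < 6" using \<phi> assms(3) by (auto simp: bij_betw_def)
    show "P (\<phi> x1) = \<phi> x1" using cnj_perm_fixed_iff[OF \<phi> P assms(3)] assms(4) by simp
  qed
  moreover have "\<phi> x2 < 6" "P (\<phi> x2) \<noteq> \<phi> x2"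
    using \<phi> cnj_perm_fixed_iff[OF \<phi> P assms(5)] assms(5,6) by (auto simp: bij_betw_def)
  ultimately show False by blast
qed

lemma T4_1_cnj_is_square:
  assumes "galois_group_is p 4 T4_1" and "s \<in> root_set p" "s \<notin> \<real>"
  obtains \<tau> where "\<tau> \<in> gal_auts p" "\<And>x. x \<in> root_set p \<Longrightarrow> cnj x = \<tau> (\<tau> x)"
proof -
  let ?c = "cycle_of_list [0,1,2,3] :: nat \<Rightarrow> nat"
  obtain \<phi> where \<phi>: "bij_betw \<phi> (root_set p) {..<4}"
    and auts: "\<And>\<sigma>. \<sigma> \<in> gal_auts p \<Longrightarrow> \<exists>P\<in>T4_1. \<forall>x\<in>root_set p. P (\<phi> x) = \<phi> (\<sigma> x)"
    and perms: "\<And>P. P \<in> T4_1 \<Longrightarrow> \<exists>\<sigma>\<in>gal_auts p. \<forall>x\<in>root_set p. P (\<phi> x) = \<phi> (\<sigma> x)"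
    using assms(1) unfolding galois_group_is_def by (elim perm_conjE) blast
  obtain P where "P \<in> T4_1" and P: "\<And>x. x \<in> root_set p \<Longrightarrow> P (\<phi> x) = \<phi> (cnj x)"
    using auts[OF cnj_gal_aut] by blast
  obtain \<tau> where \<tau>: "\<tau> \<in> gal_auts p" and c: "\<And>x. x \<in> root_set p \<Longrightarrow> ?c (\<phi> x) = \<phi> (\<tau> x)"
    using perms[OF cycle4_in_T4_1] by blast
  have square: "\<forall>k<4. P k = ?c (?c k)"
  proof (rule T4_1_nontrivial_involution)
    show "\<forall>k<4. P (P k) = k" using cnj_perm_involution[OF \<phi> P] .
    show "\<phi> s < 4" using \<phi> assms(2) by (auto simp: bij_betw_def)
    show "P (\<phi> s) \<noteq> \<phi> s" using cnj_perm_fixed_iff[OF \<phi> P assms(2)] assms(3) by simp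
  qed fact
  show ?thesis
  proof (rule that[OF \<tau>])
    fix x assume x: "x \<in> root_set p"
    have "\<phi> x < 4"
      using \<phi> x by (auto simp: bij_betw_def)
    then have "\<phi> (cnj x) = ?c (?c (\<phi> x))"
      using P[OF x] square by metis
    also have "\<dots> = \<phi> (\<tau> (\<tau> x))"
      by (simp only: c[OF x] c[OF gal_aut_root_set[OF \<tau> x]])
    finally show "cnj x = \<tau> (\<tau> x)"
      by (rule inj_onD[OF bij_betw_imp_inj_on[OF \<phi>]])
        (simp_all add: x cnj_root_set gal_aut_root_set[OF \<tau>])
  qed
qed

section \<open>Roots of the trinomials\<close>

lemma poly_map_of_rat_trinomial:
  "poly (map_poly of_rat (monom 1 n + smult a (monom 1 m) + [:b:])) (z :: complex)
     = z ^ n + of_rat a * z ^ m + of_rat b"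
proof -
  have "map_poly (of_rat :: rat \<Rightarrow> complex) (monom 1 n + smult a (monom 1 m) + [:b:])
      = monom 1 n + smult (of_rat a) (monom 1 m) + [:of_rat b:]"
    by (rule poly_eqI)
      (simp add: coeff_map_poly of_rat_add coeff_monom coeff_pCons split: nat.split)
  then show ?thesis
    by (simp add: poly_monom)
qed

lemma irreducible_trinomial_const_nonzero:
  fixes a b :: rat
  assumes irr: "irreducible (monom 1 n + smult a (monom 1 m) + [:b:])" and "0 < m" "m < n"
  shows "b \<noteq> 0"
proof
  assume "b = 0"
  then have "monom 1 n + smult a (monom 1 m) + [:b:] = monom 1 m * (monom 1 (n - m) + [:a:])"
    using \<open>m < n\<close> by (simp add: algebra_simps mult_monom smult_monom flip: monom_0)
  moreover have "\<not> is_unit (monom (1::rat) m)"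
    using \<open>0 < m\<close> by (simp add: is_unit_iff_degree degree_monom_eq)
  moreover have "\<not> is_unit (monom (1::rat) (n - m) + [:a:])"
  proof -
    have "degree (monom (1::rat) (n - m) + [:a:]) = n - m"
      using \<open>m < n\<close> by (simp add: degree_add_eq_left degree_monom_eq)
    then show ?thesis
      using \<open>m < n\<close> by (metis is_unit_iff_degree degree_0 zero_less_diff less_irrefl)
  qed
  ultimately show False
    using irr irreducibleD by metis
qed

lemma sextic_real_and_nonreal_roots:
  fixes a b :: rat
  assumes "b \<noteq> 0" and "4 * b \<le> a\<^sup>2"
  obtains x1 x2 where "x1 \<in> root_set (monom 1 6 + smult a (monom 1 3) + [:b:])" "x1 \<in> \<real>"
    and "x2 \<in> root_set (monom 1 6 + smult a (monom 1 3) + [:b:])" "x2 \<notin> \<real>"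
proof -
  define ar br where "ar = (of_rat a :: real)" and "br = (of_rat b :: real)"
  have "4 * br \<le> ar\<^sup>2"
    using assms(2) unfolding ar_def br_def
    by (metis of_rat_less_eq of_rat_mult of_rat_numeral_eq of_rat_power)
  define u where "u = (- ar + sqrt (ar\<^sup>2 - 4 * br)) / 2"
  have u: "u\<^sup>2 + ar * u + br = 0"
    using \<open>4 * br \<le> ar\<^sup>2\<close> unfolding u_def by (simp add: power2_eq_square field_simps)
  have "u \<noteq> 0"
    using u assms(1) unfolding br_def by auto
  define r where "r = root 3 u"
  have "r ^ 3 = u" and "r \<noteq> 0"
    using \<open>u \<noteq> 0\<close> unfolding r_def by (simp_all add: odd_real_root_pow)
  define \<omega> where "\<omega> = cis (2 * pi / 3)"
  have "\<omega> ^ 3 = 1" and "\<omega> \<notin> \<real>"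
    unfolding \<omega>_def using sin_gt_zero[of "2 * pi / 3"]
    by (simp_all add: DeMoivre complex_is_Real_iff)
  have root: "z \<in> root_set (monom 1 6 + smult a (monom 1 3) + [:b:])" if "z ^ 3 = of_real u" for z
  proof -
    have "z ^ 6 = (z ^ 3)\<^sup>2"
      by (simp flip: power_mult)
    then have "z ^ 6 + of_rat a * z ^ 3 + of_rat b = of_real (u\<^sup>2 + ar * u + br)"
      using that unfolding ar_def br_def by (simp add: complex_of_rat_eq_of_real)
    then show ?thesis
      using u unfolding root_set_def by (simp add: poly_map_of_rat_trinomial)
  qed
  show ?thesis
  proof (rule that)
    show "of_real r \<in> root_set (monom 1 6 + smult a (monom 1 3) + [:b:])"
      using \<open>r ^ 3 = u\<close> by (intro root) (simp flip: of_real_power)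
    show "of_real r * \<omega> \<in> root_set (monom 1 6 + smult a (monom 1 3) + [:b:])"
      using \<open>r ^ 3 = u\<close> \<open>\<omega> ^ 3 = 1\<close>
      by (intro root) (simp add: power_mult_distrib flip: of_real_power)
    show "of_real r * \<omega> \<notin> \<real>"
      using \<open>r \<noteq> 0\<close> \<open>\<omega> \<notin> \<real>\<close>
      by (metis Reals_divide Reals_of_real nonzero_mult_div_cancel_left of_real_eq_0_iff)
  qed simp
qed

lemma quartic_root_over_nonreal_quadratic_root:
  fixes a b :: rat
  assumes "a\<^sup>2 < 4 * b"
  obtains u s where "u\<^sup>2 + of_rat a * u + of_rat b = 0" "u \<notin> \<real>"
    and "s \<in> root_set (monom 1 4 + smult a (monom 1 2) + [:b:])" "s\<^sup>2 = u"
proof -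
  define ar br where "ar = (of_rat a :: real)" and "br = (of_rat b :: real)"
  have "ar\<^sup>2 < 4 * br"
    using assms unfolding ar_def br_def
    by (metis of_rat_less of_rat_mult of_rat_numeral_eq of_rat_power)
  define u where "u = Complex (- ar / 2) (sqrt (4 * br - ar\<^sup>2) / 2)"
  have u: "u\<^sup>2 + of_rat a * u + of_rat b = 0"
    using \<open>ar\<^sup>2 < 4 * br\<close> unfolding u_def ar_def br_def
    by (simp add: complex_of_rat_eq_of_real complex_eq_iff power2_eq_square field_simps)
  have "u \<notin> \<real>"
    using \<open>ar\<^sup>2 < 4 * br\<close> unfolding u_def by (simp add: complex_is_Real_iff)
  have "(csqrt u)\<^sup>2 = u"
    by simp
  moreover have "csqrt u \<in> root_set (monom 1 4 + smult a (monom 1 2) + [:b:])"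
    using u unfolding root_set_def
    by (simp add: poly_map_of_rat_trinomial power_mult[of "csqrt u" 2 2, simplified])
  ultimately show ?thesis
    using that u \<open>u \<notin> \<real>\<close> by blast
qed

lemma sextic_galois_group_not_T6:
  fixes a b :: rat
  assumes "b \<noteq> 0" and "4 * b \<le> a\<^sup>2" and "T \<subseteq> T6_1 \<union> T6_2 \<union> T6_5"
  shows "\<not> galois_group_is (monom 1 6 + smult a (monom 1 3) + [:b:]) 6 T"
proof
  assume "galois_group_is (monom 1 6 + smult a (monom 1 3) + [:b:]) 6 T"
  moreover obtain x1 x2
    where "x1 \<in> root_set (monom 1 6 + smult a (monom 1 3) + [:b:])" "x1 \<in> \<real>"
      and "x2 \<in> root_set (monom 1 6 + smult a (monom 1 3) + [:b:])" "x2 \<notin> \<real>"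
    using sextic_real_and_nonreal_roots[OF assms(1,2)] .
  ultimately show False
    using T6_galois_group_no_real_and_nonreal_roots assms(3) by blast
qed

lemma quartic_galois_group_not_T4_1:
  fixes a b :: rat
  assumes "a\<^sup>2 < 4 * b"
  shows "\<not> galois_group_is (monom 1 4 + smult a (monom 1 2) + [:b:]) 4 T4_1"
proof
  let ?p = "monom 1 4 + smult a (monom 1 2) + [:b:]"
  assume G: "galois_group_is ?p 4 T4_1"
  obtain u s where u: "u\<^sup>2 + of_rat a * u + of_rat b = 0" "u \<notin> \<real>"
    and s: "s \<in> root_set ?p" "s\<^sup>2 = u"
    using quartic_root_over_nonreal_quadratic_root[OF assms] .
  have "s \<notin> \<real>"
    using s(2) u(2) by (metis Reals_power)
  obtain \<tau> where \<tau>: "\<tau> \<in> gal_auts ?p"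
    and square: "\<And>x. x \<in> root_set ?p \<Longrightarrow> cnj x = \<tau> (\<tau> x)"
    using T4_1_cnj_is_square[OF G s(1) \<open>s \<notin> \<real>\<close>] by blast
  have sK: "s \<in> splitting_field ?p" and "\<tau> s \<in> splitting_field ?p"
    using s(1) root_set_subset_splitting_field gal_aut_image[OF \<tau>] by blast+
  have uK: "u \<in> splitting_field ?p"
    using s(2) sK is_subfield_splitting_field by (auto simp: is_subfield_def power2_eq_square)
  have "cnj u = (\<tau> (\<tau> s))\<^sup>2"
    using s(2) square[OF s(1)] by auto
  also have "\<dots> = \<tau> (\<tau> u)"
    using sK \<open>\<tau> s \<in> splitting_field ?p\<close>
    by (simp add: s(2)[symmetric] power2_eq_square gal_aut_mult[OF \<tau>])
  also have "\<dots> = u"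
    using gal_aut_quadratic_involution[OF \<tau> uK u(1)] .
  finally show False
    using u(2) Reals_cnj_iff by blast
qed

theorem lemma3p4:
  fixes a b :: rat
  assumes "irreducible (monom 1 12 + smult a (monom 1 6) + [:b:])"
  shows "\<not> (galois_group_is (monom 1 4 + smult a (monom 1 2) + [:b:]) 4 T4_1 \<and>
            (galois_group_is (monom 1 6 + smult a (monom 1 3) + [:b:]) 6 T6_1 \<or>
             galois_group_is (monom 1 6 + smult a (monom 1 3) + [:b:]) 6 T6_2 \<or>
             galois_group_is (monom 1 6 + smult a (monom 1 3) + [:b:]) 6 T6_5))"
proof (cases "4 * b \<le> a\<^sup>2")
  case True
  have "b \<noteq> 0"
    using irreducible_trinomial_const_nonzero[OF assms] by simp
  then show ?thesis
    using sextic_galois_group_not_T6[OF _ True] by blast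
next
  case False
  then show ?thesis
    using quartic_galois_group_not_T4_1 by (simp add: not_le)
qed

end
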